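(* Let $\mathcal G$ be a graph. An agglomeration $a\in\mathbf A(\mathcal G)$ is an atom of $\mathbf A(\mathcal G)$ if and only if $a=\mathbf 1_{\mathcal G'}$ for a non-null, connected subgraph $\mathcal G'$ of $\mathcal G$.
   Context: A graph $\mathcal G=(V,E,r)$ consists of a finite vertex set $V$, a finite edge set $E$ disjoint from $V$, and a map $r$ assigning to each edge a two-element subset of $V$; multiple edges allowed, no loops. An agglomeration on $\mathcal G$ is a function $a\colon V\cup E\to\mathbb N_0$ with $a(v)\ge a(e)$ whenever $v$ is incident with $e$; $\mathbf A(\mathcal G)$ is the monoid of agglomerations under pointwise addition. For a subgraph $\mathcal G'$, $\mathbf 1_{\mathcal G'}$ is $1$ on vertices and edges of $\mathcal G'$ and $0$ elsewhere. An atom is a nonzero element that cannot be written as a sum of two nonzero elements. *)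

theory Defs
  imports Main
begin

text \<open>A graph: finite vertex set V (of type 'v), finite edge set E (of type 'e; disjointness
  of V and E is automatic since they live in different types), and r assigning to each edge
  a two-element subset of V. Multiple edges allowed, no loops.\<close>
definition is_graph :: "'v set \<Rightarrow> 'e set \<Rightarrow> ('e \<Rightarrow> 'v set) \<Rightarrow> bool" where
  "is_graph V E r \<longleftrightarrow> finite V \<and> finite E \<and> (\<forall>e\<in>E. r e \<subseteq> V \<and> card (r e) = 2)"

text \<open>Functions on V \<union> E are represented as functions on the disjoint sum 'v + 'e
  which vanish outside Inl ` V \<union> Inr ` E.\<close>
definition agglomeration :: "'v set \<Rightarrow> 'e set \<Rightarrow> ('e \<Rightarrow> 'v set) \<Rightarrow> ('v + 'e \<Rightarrow> nat) \<Rightarrow> bool" where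
  "agglomeration V E r a \<longleftrightarrow>
     (\<forall>x. x \<notin> Inl ` V \<union> Inr ` E \<longrightarrow> a x = 0) \<and>
     (\<forall>e\<in>E. \<forall>v\<in>r e. a (Inr e) \<le> a (Inl v))"

definition agg_set :: "'v set \<Rightarrow> 'e set \<Rightarrow> ('e \<Rightarrow> 'v set) \<Rightarrow> ('v + 'e \<Rightarrow> nat) set" ("\<A>") where
  "\<A> V E r = {a. agglomeration V E r a}"

definition is_atom :: "'v set \<Rightarrow> 'e set \<Rightarrow> ('e \<Rightarrow> 'v set) \<Rightarrow> ('v + 'e \<Rightarrow> nat) \<Rightarrow> bool" where
  "is_atom V E r a \<longleftrightarrow> a \<in> \<A> V E r \<and> a \<noteq> (\<lambda>_. 0) \<and>
     \<not> (\<exists>b\<in>\<A> V E r. \<exists>c\<in>\<A> V E r. b \<noteq> (\<lambda>_. 0) \<and> c \<noteq> (\<lambda>_. 0) \<and> a = (\<lambda>x. b x + c x))"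

definition is_subgraph :: "'v set \<Rightarrow> 'e set \<Rightarrow> ('e \<Rightarrow> 'v set) \<Rightarrow> 'v set \<Rightarrow> 'e set \<Rightarrow> bool" where
  "is_subgraph V E r V' E' \<longleftrightarrow> V' \<subseteq> V \<and> E' \<subseteq> E \<and> (\<forall>e\<in>E'. r e \<subseteq> V')"

definition adj :: "('e \<Rightarrow> 'v set) \<Rightarrow> 'e set \<Rightarrow> ('v \<times> 'v) set" where
  "adj r E' = {(u, w). \<exists>e\<in>E'. r e = {u, w}}"

definition connected_graph :: "'v set \<Rightarrow> 'e set \<Rightarrow> ('e \<Rightarrow> 'v set) \<Rightarrow> bool" where
  "connected_graph V' E' r \<longleftrightarrow> (\<forall>u\<in>V'. \<forall>w\<in>V'. (u, w) \<in> (adj r E')\<^sup>*)"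

definition indic :: "'v set \<Rightarrow> 'e set \<Rightarrow> ('v + 'e \<Rightarrow> nat)" where
  "indic V' E' = (\<lambda>x. case x of Inl v \<Rightarrow> (if v \<in> V' then 1 else 0)
                               | Inr e \<Rightarrow> (if e \<in> E' then 1 else 0))"

end

theory Submission
  imports Defs
begin

text \<open>Subtracting the indicator of its support from an agglomeration leaves an agglomeration,
  so an atom coincides with the indicator of its support, which is a subgraph. If that
  subgraph were disconnected, the indicators of a component and of its complement would
  decompose it. Conversely, let the indicator of a connected subgraph be a sum \<open>b + c\<close>. Where
  \<open>b\<close> is positive at a vertex, \<open>c\<close> vanishes there and hence on the incident edges of the
  subgraph, so \<open>b\<close> is 1 on these edges and positive at their other endpoints. By connectedness
  \<open>b\<close> is then positive at every vertex of the subgraph, which leaves no vertex for \<open>c\<close>.\<close>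

definition vertex_support :: "('v + 'e \<Rightarrow> nat) \<Rightarrow> 'v set" where
  "vertex_support a = {v. 0 < a (Inl v)}"

definition edge_support :: "('v + 'e \<Rightarrow> nat) \<Rightarrow> 'e set" where
  "edge_support a = {e. 0 < a (Inr e)}"

lemma indic_simps [simp]:
  "indic V' E' (Inl v) = (if v \<in> V' then 1 else 0)"
  "indic V' E' (Inr e) = (if e \<in> E' then 1 else 0)"
  by (simp_all add: indic_def)

lemma indic_le_1: "indic V' E' x \<le> 1"
  by (cases x) simp_all

lemma indic_eq_zero_iff: "indic V' E' = (\<lambda>_. 0) \<longleftrightarrow> V' = {} \<and> E' = {}"
proof
  assume zero: "indic V' E' = (\<lambda>_. 0)"
  have "v \<notin> V'" for v using fun_cong[OF zero, of "Inl v"] by (simp split: if_splits)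
  moreover have "e \<notin> E'" for e using fun_cong[OF zero, of "Inr e"] by (simp split: if_splits)
  ultimately show "V' = {} \<and> E' = {}" by blast
qed (auto simp: indic_def split: sum.split)

lemma is_atom_iff:
  "is_atom V E r a \<longleftrightarrow> agglomeration V E r a \<and> a \<noteq> (\<lambda>_. 0) \<and>
     (\<forall>b c. agglomeration V E r b \<longrightarrow> agglomeration V E r c \<longrightarrow>
        a = (\<lambda>x. b x + c x) \<longrightarrow> b = (\<lambda>_. 0) \<or> c = (\<lambda>_. 0))"
  by (auto simp: is_atom_def agg_set_def)

lemma is_atomD:
  assumes "is_atom V E r a" and "agglomeration V E r b" and "agglomeration V E r c"
    and "a = (\<lambda>x. b x + c x)"
  shows "b = (\<lambda>_. 0) \<or> c = (\<lambda>_. 0)"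
  using assms unfolding is_atom_iff by blast

lemma edge_eq_doubleton:
  assumes "is_graph V E r" and "e \<in> E" and "v \<in> r e"
  obtains w where "r e = {v, w}"
proof -
  have "card (r e) = 2" using assms unfolding is_graph_def by auto
  then obtain x y where "r e = {x, y}" by (meson card_2_iff)
  with \<open>v \<in> r e\<close> have "r e = {v, if v = x then y else x}" by auto
  then show thesis by (rule that)
qed

lemma agglomeration_nonzero_imp_vertex_pos:
  assumes "is_graph V E r" and "agglomeration V E r a" and "a \<noteq> (\<lambda>_. 0)"
  obtains v where "0 < a (Inl v)"
proof -
  obtain x where x: "0 < a x" using assms(3) by (auto simp: fun_eq_iff)
  show thesis
  proof (cases x)
    case (Inl v)
    then show thesis using x that by simp
  next
    case (Inr e)
    then have "e \<in> E" using assms(2) x unfolding agglomeration_def by force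
    then have "r e \<noteq> {}" using assms(1) unfolding is_graph_def by auto
    then obtain v where "v \<in> r e" by blast
    then have "a (Inr e) \<le> a (Inl v)" using assms(2) \<open>e \<in> E\<close> unfolding agglomeration_def by blast
    then have "0 < a (Inl v)" using x Inr by simp
    then show thesis by (rule that)
  qed
qed

lemma agglomeration_indic_iff: "agglomeration V E r (indic V' E') \<longleftrightarrow> is_subgraph V E r V' E'"
proof
  assume ag: "agglomeration V E r (indic V' E')"
  have vanish: "indic V' E' x = 0" if "x \<notin> Inl ` V \<union> Inr ` E" for x
    using ag that unfolding agglomeration_def by blast
  show "is_subgraph V E r V' E'"
    unfolding is_subgraph_def
  proof (intro conjI subsetI ballI)
    fix v assume "v \<in> V'"
    then show "v \<in> V" using vanish[of "Inl v"] by auto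
  next
    fix e assume "e \<in> E'"
    then show "e \<in> E" using vanish[of "Inr e"] by auto
  next
    fix e v assume "e \<in> E'" "v \<in> r e"
    moreover from \<open>e \<in> E'\<close> have "e \<in> E" using vanish[of "Inr e"] by auto
    ultimately show "v \<in> V'" using ag unfolding agglomeration_def by fastforce
  qed
next
  assume "is_subgraph V E r V' E'"
  then show "agglomeration V E r (indic V' E')"
    unfolding agglomeration_def is_subgraph_def by (auto simp: indic_def split: sum.split)
qed

lemma agglomeration_support_subgraph:
  assumes "agglomeration V E r a"
  shows "is_subgraph V E r (vertex_support a) (edge_support a)"
  using assms unfolding agglomeration_def is_subgraph_def vertex_support_def edge_support_def
  by (force simp: image_iff)

lemma agglomeration_diff_indic_support:
  assumes "agglomeration V E r a"
  shows "agglomeration V E r (\<lambda>x. a x - indic (vertex_support a) (edge_support a) x)"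
  unfolding agglomeration_def
proof (intro conjI allI ballI impI)
  fix x assume "x \<notin> Inl ` V \<union> Inr ` E"
  then show "a x - indic (vertex_support a) (edge_support a) x = 0"
    using assms unfolding agglomeration_def by simp
next
  fix e v assume "e \<in> E" "v \<in> r e"
  then have "a (Inr e) \<le> a (Inl v)" using assms unfolding agglomeration_def by blast
  then show "a (Inr e) - indic (vertex_support a) (edge_support a) (Inr e)
      \<le> a (Inl v) - indic (vertex_support a) (edge_support a) (Inl v)"
    by (auto simp: vertex_support_def edge_support_def)
qed

lemma atom_eq_indic_support:
  assumes "is_atom V E r a"
  shows "a = indic (vertex_support a) (edge_support a)"
proof -
  let ?s = "indic (vertex_support a) (edge_support a)"
  have ag: "agglomeration V E r a" and nz: "a \<noteq> (\<lambda>_. 0)"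
    using assms by (simp_all add: is_atom_iff)
  have s_le: "?s x \<le> a x" for x
    by (cases x) (auto simp: vertex_support_def edge_support_def)
  have s_nz: "?s \<noteq> (\<lambda>_. 0)"
  proof
    assume zero: "?s = (\<lambda>_. 0)"
    have "a x = 0" for x
      using fun_cong[OF zero, of x]
      by (cases x) (auto simp: vertex_support_def edge_support_def split: if_splits)
    with nz show False by auto
  qed
  have split: "a = (\<lambda>x. ?s x + (a x - ?s x))"
    using s_le by (simp add: fun_eq_iff)
  have "agglomeration V E r ?s"
    using agglomeration_support_subgraph[OF ag] by (simp add: agglomeration_indic_iff)
  from is_atomD[OF assms this agglomeration_diff_indic_support[OF ag] split] s_nz
  have rest_zero: "(\<lambda>x. a x - ?s x) = (\<lambda>_. 0)" by simp
  have "a x \<le> ?s x" for x using fun_cong[OF rest_zero, of x] by simp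
  with s_le show ?thesis by (simp add: fun_eq_iff le_antisym)
qed

lemma indic_split_closed:
  assumes "is_subgraph V E r V' E'" and "C \<subseteq> V'"
    and "\<And>e. e \<in> E' \<Longrightarrow> r e \<inter> C \<noteq> {} \<Longrightarrow> r e \<subseteq> C"
  defines "F \<equiv> {e \<in> E'. r e \<subseteq> C}"
  shows "is_subgraph V E r C F" and "is_subgraph V E r (V' - C) (E' - F)"
    and "indic V' E' = (\<lambda>x. indic C F x + indic (V' - C) (E' - F) x)"
proof -
  show "is_subgraph V E r C F" "is_subgraph V E r (V' - C) (E' - F)"
    using assms unfolding is_subgraph_def by auto
  show "indic V' E' = (\<lambda>x. indic C F x + indic (V' - C) (E' - F) x)"
  proof
    fix x show "indic V' E' x = indic C F x + indic (V' - C) (E' - F) x"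
      using assms(2) by (cases x) (auto simp: F_def)
  qed
qed

lemma not_connected_imp_closed_part:
  assumes "is_graph V E r" and "is_subgraph V E r V' E'" and "\<not> connected_graph V' E' r"
  obtains C where "C \<subseteq> V'" "C \<noteq> {}" "V' - C \<noteq> {}"
    "\<And>e. e \<in> E' \<Longrightarrow> r e \<inter> C \<noteq> {} \<Longrightarrow> r e \<subseteq> C"
proof -
  obtain u w where uw: "u \<in> V'" "w \<in> V'" "(u, w) \<notin> (adj r E')\<^sup>*"
    using assms(3) unfolding connected_graph_def by blast
  define C where "C = {x \<in> V'. (u, x) \<in> (adj r E')\<^sup>*}"
  have "r e \<subseteq> C" if e: "e \<in> E'" and meets: "r e \<inter> C \<noteq> {}" for e
  proof -
    obtain v where v: "v \<in> r e" "v \<in> C" using meets by blast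
    have "e \<in> E" using assms(2) e by (auto simp: is_subgraph_def)
    then obtain y where y: "r e = {v, y}" by (rule edge_eq_doubleton[OF assms(1) _ v(1)])
    then have "(v, y) \<in> adj r E'" using e by (auto simp: adj_def)
    with v(2) have "(u, y) \<in> (adj r E')\<^sup>*" by (auto simp: C_def)
    moreover have "y \<in> V'" using assms(2) e y by (auto simp: is_subgraph_def)
    ultimately show "r e \<subseteq> C" using y v(2) by (auto simp: C_def)
  qed
  then show thesis using that[of C] uw by (auto simp: C_def)
qed

lemma atom_indic_imp_connected:
  assumes "is_graph V E r" and "is_subgraph V E r V' E'" and "is_atom V E r (indic V' E')"
  shows "connected_graph V' E' r"
proof (rule ccontr)
  assume "\<not> connected_graph V' E' r"
  then obtain C where C: "C \<subseteq> V'" "C \<noteq> {}" "V' - C \<noteq> {}"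
    and closed: "\<And>e. e \<in> E' \<Longrightarrow> r e \<inter> C \<noteq> {} \<Longrightarrow> r e \<subseteq> C"
    using not_connected_imp_closed_part[OF assms(1,2)] by blast
  let ?F = "{e \<in> E'. r e \<subseteq> C}"
  note split = indic_split_closed[OF assms(2) C(1) closed]
  have "agglomeration V E r (indic C ?F)" and "agglomeration V E r (indic (V' - C) (E' - ?F))"
    using split(1,2) by (simp_all add: agglomeration_indic_iff)
  moreover have "indic C ?F \<noteq> (\<lambda>_. 0)" and "indic (V' - C) (E' - ?F) \<noteq> (\<lambda>_. 0)"
    using C(2,3) by (simp_all add: indic_eq_zero_iff)
  ultimately show False
    using is_atomD[OF assms(3) _ _ split(3)] by blast
qed

lemma sum_eq_indic_pos_propagates:
  assumes "is_subgraph V E r V' E'" and "agglomeration V E r b" and "agglomeration V E r c"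
    and sum: "\<And>x. b x + c x = indic V' E' x"
    and "(x, y) \<in> adj r E'" and "0 < b (Inl x)"
  shows "0 < b (Inl y)"
proof -
  obtain e where e: "e \<in> E'" "r e = {x, y}" using assms(5) by (auto simp: adj_def)
  have "e \<in> E" using assms(1) e(1) by (auto simp: is_subgraph_def)
  have "c (Inl x) = 0" using sum[of "Inl x"] indic_le_1[of V' E' "Inl x"] assms(6) by linarith
  moreover have "c (Inr e) \<le> c (Inl x)"
    using assms(3) \<open>e \<in> E\<close> e(2) unfolding agglomeration_def by blast
  ultimately have "b (Inr e) = 1" using sum[of "Inr e"] e(1) by simp
  moreover have "b (Inr e) \<le> b (Inl y)"
    using assms(2) \<open>e \<in> E\<close> e(2) unfolding agglomeration_def by blast
  ultimately show ?thesis by linarith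
qed

lemma connected_indic_is_atom:
  assumes "is_graph V E r" and "is_subgraph V E r V' E'" and "V' \<noteq> {}"
    and "connected_graph V' E' r"
  shows "is_atom V E r (indic V' E')"
  unfolding is_atom_iff
proof (intro conjI allI impI)
  show "agglomeration V E r (indic V' E')" using assms(2) by (simp add: agglomeration_indic_iff)
  show "indic V' E' \<noteq> (\<lambda>_. 0)" using assms(3) by (simp add: indic_eq_zero_iff)
  fix b c
  assume b: "agglomeration V E r b" and c: "agglomeration V E r c"
    and "indic V' E' = (\<lambda>x. b x + c x)"
  then have sum: "b x + c x = indic V' E' x" for x by simp
  show "b = (\<lambda>_. 0) \<or> c = (\<lambda>_. 0)"
  proof (rule ccontr)
    assume "\<not> ?thesis"
    then have "b \<noteq> (\<lambda>_. 0)" "c \<noteq> (\<lambda>_. 0)" by simp_all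
    obtain u where u: "0 < b (Inl u)"
      by (rule agglomeration_nonzero_imp_vertex_pos[OF assms(1) b \<open>b \<noteq> (\<lambda>_. 0)\<close>])
    obtain w where w: "0 < c (Inl w)"
      by (rule agglomeration_nonzero_imp_vertex_pos[OF assms(1) c \<open>c \<noteq> (\<lambda>_. 0)\<close>])
    have "u \<in> V'" "w \<in> V'" using sum[of "Inl u"] sum[of "Inl w"] u w by (auto split: if_splits)
    then have "(u, w) \<in> (adj r E')\<^sup>*" using assms(4) by (simp add: connected_graph_def)
    then have "0 < b (Inl w)"
      using u by induction (auto intro: sum_eq_indic_pos_propagates[OF assms(2) b c sum])
    then show False using w sum[of "Inl w"] indic_le_1[of V' E' "Inl w"] by linarith
  qed
qed

theorem proposition4p5:
  fixes V :: "'v set" and E :: "'e set" and r :: "'e \<Rightarrow> 'v set" and a :: "'v + 'e \<Rightarrow> nat"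
  assumes "is_graph V E r"
    and "a \<in> \<A> V E r"
  shows "is_atom V E r a \<longleftrightarrow>
    (\<exists>V' E'. is_subgraph V E r V' E' \<and> V' \<noteq> {} \<and> connected_graph V' E' r \<and> a = indic V' E')"
proof
  assume atom: "is_atom V E r a"
  let ?V' = "vertex_support a" and ?E' = "edge_support a"
  have ag: "agglomeration V E r a" using assms(2) by (simp add: agg_set_def)
  have a_eq: "a = indic ?V' ?E'" using atom by (rule atom_eq_indic_support)
  have sub: "is_subgraph V E r ?V' ?E'" using ag by (rule agglomeration_support_subgraph)
  have "a \<noteq> (\<lambda>_. 0)" using atom by (simp add: is_atom_iff)
  then obtain v where "0 < a (Inl v)"
    by (rule agglomeration_nonzero_imp_vertex_pos[OF assms(1) ag])
  then have "?V' \<noteq> {}" by (auto simp: vertex_support_def)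
  moreover have "connected_graph ?V' ?E' r"
    using atom_indic_imp_connected[OF assms(1) sub] atom a_eq by simp
  ultimately show "\<exists>V' E'. is_subgraph V E r V' E' \<and> V' \<noteq> {} \<and> connected_graph V' E' r \<and> a = indic V' E'"
    using sub a_eq by blast
next
  assume "\<exists>V' E'. is_subgraph V E r V' E' \<and> V' \<noteq> {} \<and> connected_graph V' E' r \<and> a = indic V' E'"
  then show "is_atom V E r a" using connected_indic_is_atom[OF assms(1)] by blast
qed

end
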